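(* Let $X\in\mathbb{R}^{n\times p}$ with columns $X_1,\ldots,X_p\in\mathbb{R}^n$, $S=\frac1nX^TX$, and $\lambda_1,\lambda_2>0$. Assume $np < p(p-1)/2$. Let $A\in\mathbb{R}^{np\times p(p-1)/2}$ be the matrix whose rows are partitioned into $p$ blocks of $n$ rows each and whose columns are indexed by pairs $(k,\ell)$, $1\le k<\ell\le p$, in the order $(1,2),(1,3),\ldots,(1,p),(2,3),\ldots,(p-1,p)$; the column indexed by $(k,\ell)$ equals $-X_\ell$ in row block $k$, $-X_k$ in row block $\ell$, and $0$ in all other blocks. Let $\hat\Omega^{\mathrm{net}}$ be the minimizer over $\Omega\in\mathbb{R}^{p\times p}$ of $-\tfrac12\log\det(\Omega_{\mathrm{diag}}^2)+\tfrac n2\operatorname{Tr}(S\Omega^2)+\lambda_1\|\Omega_{\mathrm{off}}\|_1+\tfrac{\lambda_2}{2}\|\Omega\|_F^2$, and call any minimizer over symmetric $\Omega\in\mathbb{R}^{p\times p}$ of $-\tfrac12\log\det(\Omega_{\mathrm{diag}}^2)+\tfrac n2\operatorname{Tr}(S\Omega^2)+\lambda_1\|\Omega_{\mathrm{off}}\|_1$ a CONCORD estimate. Then $\operatorname{card}\operatorname{vech}\hat\Omega^{\mathrm{net}}\le p(p-1)/2$ (the PseudoNet estimate does not saturate); there exists a CONCORD estimate $\hat\Omega^{\mathrm{conc}}$ with $\operatorname{card}\operatorname{vech}\hat\Omega^{\mathrm{conc}}\le np$; and if the columns of $A$ are in general position, then every CONCORD estimate $\hat\Omega^{\mathrm{conc}}$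 satisfies $\operatorname{card}\operatorname{vech}\hat\Omega^{\mathrm{conc}}\le np$.
   Context: $\Omega_{\mathrm{diag}}$ keeps the diagonal of $\Omega$ and zeroes the rest; $\Omega_{\mathrm{off}}$ keeps the off-diagonal entries and zeroes the diagonal; $\|\cdot\|_1$ is the elementwise $\ell_1$ norm and $\|\cdot\|_F$ the Frobenius norm. $\operatorname{vech}$ is the half-vectorization: the vector in $\mathbb{R}^{p(p-1)/2}$ of the strictly lower-triangular entries of its matrix argument (diagonal excluded). $\operatorname{card}$ counts nonzero entries. The columns of a matrix $A\in\mathbb{R}^{k\times m}$ with $m>k$ are in general position if for any $r\le k$ columns $A_{i_1},\ldots,A_{i_r}$ and any signs $s_{i_1},\ldots,s_{i_r}\in\{+1,-1\}$, the affine span of $s_{i_1}A_{i_1},\ldots,s_{i_r}A_{i_r}$ contains none of the points $\pm A_j$, $j\notin\{i_1,\ldots,i_r\}$. *)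

theory Defs
  imports "Jordan_Normal_Form.Determinant"
begin

text \<open>Matrices are Jordan_Normal_Form matrices; indices are 0-based.
  X is n x p (n = dim_row X, p = dim_col X), Omega is p x p.\<close>

definition mtrace :: "real mat \<Rightarrow> real" where
  "mtrace M = (\<Sum>i<dim_row M. M $$ (i, i))"

definition Sigma_hat :: "real mat \<Rightarrow> real mat" where
  "Sigma_hat X = (1 / real (dim_row X)) \<cdot>\<^sub>m (transpose_mat X * X)"

definition diag_part :: "real mat \<Rightarrow> real mat" where
  "diag_part Om = mat (dim_row Om) (dim_col Om) (\<lambda>(i, j). if i = j then Om $$ (i, j) else 0)"

definition off_part :: "real mat \<Rightarrow> real mat" where
  "off_part Om = mat (dim_row Om) (dim_col Om) (\<lambda>(i, j). if i = j then 0 else Om $$ (i, j))"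

definition l1_norm_mat :: "real mat \<Rightarrow> real" where
  "l1_norm_mat M = (\<Sum>i<dim_row M. \<Sum>j<dim_col M. \<bar>M $$ (i, j)\<bar>)"

definition frob_norm :: "real mat \<Rightarrow> real" where
  "frob_norm M = sqrt (\<Sum>i<dim_row M. \<Sum>j<dim_col M. (M $$ (i, j))\<^sup>2)"

text \<open>CONCORD objective (without the ridge term); finite exactly when det (Omega_diag^2) > 0,
  otherwise it is +infinity (the log-det term is -log 0).\<close>
definition concord_obj :: "real mat \<Rightarrow> real \<Rightarrow> real mat \<Rightarrow> real" where
  "concord_obj X lam1 Om =
     - (1/2) * ln (det (diag_part Om * diag_part Om))
     + real (dim_row X) / 2 * mtrace (Sigma_hat X * Om * Om)
     + lam1 * l1_norm_mat (off_part Om)"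

definition pseudonet_obj :: "real mat \<Rightarrow> real \<Rightarrow> real \<Rightarrow> real mat \<Rightarrow> real" where
  "pseudonet_obj X lam1 lam2 Om = concord_obj X lam1 Om + lam2 / 2 * (frob_norm Om)\<^sup>2"

definition admissible :: "nat \<Rightarrow> real mat \<Rightarrow> bool" where
  "admissible p Om \<longleftrightarrow> Om \<in> carrier_mat p p \<and> det (diag_part Om * diag_part Om) > 0"

definition is_pseudonet :: "real mat \<Rightarrow> real \<Rightarrow> real \<Rightarrow> real mat \<Rightarrow> bool" where
  "is_pseudonet X lam1 lam2 Om \<longleftrightarrow> admissible (dim_col X) Om \<and>
     (\<forall>Om'. admissible (dim_col X) Om' \<longrightarrow>
        pseudonet_obj X lam1 lam2 Om \<le> pseudonet_obj X lam1 lam2 Om')"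

definition is_concord :: "real mat \<Rightarrow> real \<Rightarrow> real mat \<Rightarrow> bool" where
  "is_concord X lam1 Om \<longleftrightarrow> admissible (dim_col X) Om \<and> transpose_mat Om = Om \<and>
     (\<forall>Om'. admissible (dim_col X) Om' \<and> transpose_mat Om' = Om' \<longrightarrow>
        concord_obj X lam1 Om \<le> concord_obj X lam1 Om')"

definition vech :: "real mat \<Rightarrow> real vec" where
  "vech Om = vec_of_list [Om $$ (i, j). i \<leftarrow> [0..<dim_row Om], j \<leftarrow> [0..<i]]"

definition card_vec :: "real vec \<Rightarrow> nat" where
  "card_vec v = card {i. i < dim_vec v \<and> v $ i \<noteq> 0}"

definition pair_list :: "nat \<Rightarrow> (nat \<times> nat) list" where
  "pair_list p = [(k, l). k \<leftarrow> [0..<p], l \<leftarrow> [Suc k..<p]]"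

definition A_mat :: "real mat \<Rightarrow> real mat" where
  "A_mat X = (let n = dim_row X; p = dim_col X in
     mat (n * p) (length (pair_list p)) (\<lambda>(r, c).
       let (k, l) = pair_list p ! c; b = r div n; i = r mod n in
       if b = k then - X $$ (i, l) else if b = l then - X $$ (i, k) else 0))"

definition general_position :: "real mat \<Rightarrow> bool" where
  "general_position A \<longleftrightarrow>
     (\<forall>I s j (\<sigma>::real). I \<subseteq> {..<dim_col A} \<and> card I \<le> dim_row A \<and>
        (\<forall>i\<in>I. s i = 1 \<or> s i = (-1::real)) \<and> j < dim_col A \<and> j \<notin> I \<and>
        (\<sigma> = 1 \<or> \<sigma> = -1) \<longrightarrow>
        \<not> (\<exists>c. (\<Sum>i\<in>I. c i) = (1::real) \<and>
              (\<forall>r<dim_row A. \<sigma> * A $$ (r, j) = (\<Sum>i\<in>I. c i * (s i * A $$ (r, i))))))"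

end

theory Submission
  imports Defs
begin

text \<open>On symmetric matrices the CONCORD objective equals, up to the diagonal log-det term,
  \<open>1/2 \<parallel>X \<Omega>\<parallel>\<^sub>F\<^sup>2 + 2 \<lambda>\<^sub>1 \<parallel>vech \<Omega>\<parallel>\<^sub>1\<close>, and moving the off-diagonal pair \<open>c = (k, l)\<close> of
  \<open>\<Omega>\<close> by \<open>t\<close> changes the stacked columns of \<open>X \<Omega>\<close> by \<open>-t A\<^sub>c\<close>. Hence a minimiser satisfies
  \<open>A\<^sub>c\<^sup>T vec (X \<Omega>) = 2 \<lambda>\<^sub>1 sgn \<Omega>\<^sub>c\<close> on its support, so every null vector \<open>u\<close> of \<open>A\<close> supported
  there is orthogonal to the sign vector. If the support has more than \<open>n p\<close> elements such a
  \<open>u \<noteq> 0\<close> exists; moving \<open>\<Omega>\<close> along \<open>u\<close> leaves the quadratic term unchanged and does not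
  increase the \<open>\<ell>\<^sub>1\<close> term until the first coordinate reaches zero, which gives a minimiser
  with smaller support. Under general position, a null vector orthogonal to the signs on
  \<open>n p + 1\<close> columns would write one signed column as an affine combination of the others.\<close>

lemma homogeneous_system_nontrivial_solution:
  fixes f :: "nat \<Rightarrow> 'e \<Rightarrow> real"
  assumes "finite E" "card E > N"
  shows "\<exists>v. (\<exists>e\<in>E. v e \<noteq> 0) \<and> (\<forall>r<N. (\<Sum>e\<in>E. f r e * v e) = 0)"
  using assms
proof (induction N arbitrary: E f)
  case 0
  then obtain e where "e \<in> E" by fastforce
  then show ?case by (intro exI[of _ "\<lambda>_. 1"]) auto
next
  case (Suc N)
  show ?case
  proof (cases "\<forall>e\<in>E. f N e = 0")
    case True
    with Suc.IH[of E f] Suc.prems show ?thesis by (auto simp: less_Suc_eq)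
  next
    case False
    then obtain e0 where e0: "e0 \<in> E" "f N e0 \<noteq> 0" by auto
    define E' where "E' = E - {e0}"
    have "finite E'" "card E' > N" using Suc.prems e0 by (auto simp: E'_def)
    from Suc.IH[OF this, of "\<lambda>r e. f r e - f r e0 * f N e / f N e0"]
    obtain v' where v': "\<exists>e\<in>E'. v' e \<noteq> 0"
      "\<And>r. r < N \<Longrightarrow> (\<Sum>e\<in>E'. (f r e - f r e0 * f N e / f N e0) * v' e) = 0" by auto
    \<comment> \<open>Gaussian elimination of the unknown \<open>e0\<close> using equation \<open>N\<close>.\<close>
    define v where "v e = (if e = e0 then - (\<Sum>e\<in>E'. f N e * v' e) / f N e0 else v' e)" for e
    have split: "(\<Sum>e\<in>E. f r e * v e) = f r e0 * v e0 + (\<Sum>e\<in>E'. f r e * v' e)" for r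
      using e0 Suc.prems(1) unfolding E'_def by (simp add: sum.remove v_def)
    have "(\<Sum>e\<in>E. f r e * v e) = 0" if "r < Suc N" for r
    proof (cases "r = N")
      case True
      then show ?thesis unfolding split using e0 by (simp add: v_def)
    next
      case False
      then have "r < N" using that by simp
      have "(\<Sum>e\<in>E'. (f r e - f r e0 * f N e / f N e0) * v' e)
          = (\<Sum>e\<in>E'. f r e * v' e) - f r e0 / f N e0 * (\<Sum>e\<in>E'. f N e * v' e)"
        by (simp add: algebra_simps sum_subtractf sum_distrib_left sum_divide_distrib)
      then show ?thesis unfolding split using v'(2)[OF \<open>r < N\<close>] by (simp add: v_def)
    qed
    moreover have "\<exists>e\<in>E. v e \<noteq> 0" using v'(1) by (auto simp: v_def E'_def)
    ultimately show ?thesis by blast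
  qed
qed

lemma linear_coeff_eq_0_if_nonneg_near_0:
  fixes \<alpha> K \<delta> :: real
  assumes \<delta>: "\<delta> > 0" and K: "K \<ge> 0" and nonneg: "\<And>t. \<bar>t\<bar> < \<delta> \<Longrightarrow> 0 \<le> t * \<alpha> + t\<^sup>2 * K"
  shows "\<alpha> = 0"
proof (rule ccontr)
  assume \<alpha>: "\<alpha> \<noteq> 0"
  define \<epsilon> where "\<epsilon> = min (\<delta> / (2 * \<bar>\<alpha>\<bar>)) (1 / (2 * K + 2))"
  have \<epsilon>: "\<epsilon> > 0" using \<alpha> \<delta> K by (simp add: \<epsilon>_def)
  have "\<epsilon> * \<bar>\<alpha>\<bar> \<le> \<delta> / (2 * \<bar>\<alpha>\<bar>) * \<bar>\<alpha>\<bar>" unfolding \<epsilon>_def by (intro mult_right_mono) auto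
  then have "\<bar>- \<alpha> * \<epsilon>\<bar> < \<delta>" using \<alpha> \<delta> \<epsilon> by (simp add: abs_mult mult.commute)
  then have "0 \<le> (- \<alpha> * \<epsilon>) * \<alpha> + (- \<alpha> * \<epsilon>)\<^sup>2 * K" by (rule nonneg)
  also have "\<dots> = \<alpha>\<^sup>2 * \<epsilon> * (\<epsilon> * K - 1)"
    by (simp add: power2_eq_square algebra_simps)
  also have "\<dots> < 0"
  proof -
    have "\<epsilon> * K \<le> 1 / (2 * K + 2) * K" unfolding \<epsilon>_def using K by (intro mult_right_mono) auto
    also have "\<dots> < 1" using K by (simp add: field_simps)
    finally show ?thesis using \<alpha> \<epsilon> by (simp add: mult_pos_neg)
  qed
  finally show False by simp
qed

lemma abs_add_mult_no_sign_change:
  fixes \<beta> u t :: real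
  assumes \<beta>: "\<beta> \<noteq> 0" and t: "t \<ge> 0" and small: "sgn \<beta> * u < 0 \<Longrightarrow> t * \<bar>u\<bar> \<le> \<bar>\<beta>\<bar>"
  shows "\<bar>\<beta> + t * u\<bar> = \<bar>\<beta>\<bar> + t * (sgn \<beta> * u)"
proof (cases "\<beta> > 0")
  case True
  show ?thesis
  proof (cases "u \<ge> 0")
    case True
    then have "t * u \<ge> 0" using t by simp
    then show ?thesis using \<open>\<beta> > 0\<close> by simp
  next
    case False
    then have "- (t * u) \<le> \<beta>" using small \<open>\<beta> > 0\<close> by simp
    then show ?thesis using \<open>\<beta> > 0\<close> by simp
  qed
next
  case False
  then have "\<beta> < 0" using \<beta> by simp
  show ?thesis
  proof (cases "u \<le> 0")
    case True
    then have "t * u \<le> 0" using t by (simp add: mult_nonneg_nonpos)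
    then show ?thesis using \<open>\<beta> < 0\<close> by simp
  next
    case False
    then have "t * u \<le> - \<beta>" using small \<open>\<beta> < 0\<close> by simp
    then show ?thesis using \<open>\<beta> < 0\<close> by simp
  qed
qed

lemma exists_sgn_mult_neg:
  fixes \<beta> u :: "'a \<Rightarrow> real"
  assumes S: "finite S" and \<beta>: "\<And>c. c \<in> S \<Longrightarrow> \<beta> c \<noteq> 0" and u: "\<exists>c\<in>S. u c \<noteq> 0"
    and descent: "(\<Sum>c\<in>S. sgn (\<beta> c) * u c) \<le> 0"
  shows "\<exists>c\<in>S. sgn (\<beta> c) * u c < 0"
proof (rule ccontr)
  assume "\<not> (\<exists>c\<in>S. sgn (\<beta> c) * u c < 0)"
  then have nonneg: "\<forall>c\<in>S. sgn (\<beta> c) * u c \<ge> 0" by auto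
  then have "0 \<le> (\<Sum>c\<in>S. sgn (\<beta> c) * u c)" by (simp add: sum_nonneg)
  with descent have "(\<Sum>c\<in>S. sgn (\<beta> c) * u c) = 0" by linarith
  with nonneg have "\<forall>c\<in>S. sgn (\<beta> c) * u c = 0"
    using sum_nonneg_eq_0_iff[OF S, of "\<lambda>c. sgn (\<beta> c) * u c"] by blast
  then show False using u \<beta> by (metis mult_eq_0_iff sgn_eq_0_iff)
qed

lemma exists_zeroing_step_sum_abs_le:
  fixes \<beta> u :: "'a \<Rightarrow> real"
  assumes S: "finite S" and \<beta>: "\<And>c. c \<in> S \<Longrightarrow> \<beta> c \<noteq> 0" and u: "\<exists>c\<in>S. u c \<noteq> 0"
    and descent: "(\<Sum>c\<in>S. sgn (\<beta> c) * u c) \<le> 0"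
  shows "\<exists>t\<ge>0. \<exists>c0\<in>S. \<beta> c0 + t * u c0 = 0 \<and> (\<Sum>c\<in>S. \<bar>\<beta> c + t * u c\<bar>) \<le> (\<Sum>c\<in>S. \<bar>\<beta> c\<bar>)"
proof -
  define D where "D = {c\<in>S. sgn (\<beta> c) * u c < 0}"
  have "D \<noteq> {}"
    using exists_sgn_mult_neg[OF S \<beta> u descent] unfolding D_def by blast
  define t where "t = Min ((\<lambda>c. \<bar>\<beta> c\<bar> / \<bar>u c\<bar>) ` D)"
  have D: "finite D" using S by (simp add: D_def)
  obtain c0 where c0: "c0 \<in> D" "t = \<bar>\<beta> c0\<bar> / \<bar>u c0\<bar>"
    using Min_in[OF finite_imageI[OF D]] \<open>D \<noteq> {}\<close> unfolding t_def by auto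
  have t: "t \<ge> 0" using c0(2) by simp
  have abs_eq: "\<bar>\<beta> c + t * u c\<bar> = \<bar>\<beta> c\<bar> + t * (sgn (\<beta> c) * u c)" if "c \<in> S" for c
  proof (rule abs_add_mult_no_sign_change[OF \<beta>[OF that] t])
    assume "sgn (\<beta> c) * u c < 0"
    then have "c \<in> D" "u c \<noteq> 0" using that by (auto simp: D_def)
    then have "t \<le> \<bar>\<beta> c\<bar> / \<bar>u c\<bar>" unfolding t_def using D by simp
    then show "t * \<bar>u c\<bar> \<le> \<bar>\<beta> c\<bar>" using \<open>u c \<noteq> 0\<close> by (simp add: le_divide_eq)
  qed
  have "(\<Sum>c\<in>S. \<bar>\<beta> c + t * u c\<bar>) = (\<Sum>c\<in>S. \<bar>\<beta> c\<bar>) + t * (\<Sum>c\<in>S. sgn (\<beta> c) * u c)"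
    by (simp add: abs_eq sum.distrib sum_distrib_left)
  also have "\<dots> \<le> (\<Sum>c\<in>S. \<bar>\<beta> c\<bar>)" using t descent by (simp add: mult_nonneg_nonpos)
  finally have le: "(\<Sum>c\<in>S. \<bar>\<beta> c + t * u c\<bar>) \<le> (\<Sum>c\<in>S. \<bar>\<beta> c\<bar>)" .
  have sign: "sgn (\<beta> c0) * u c0 < 0" and "c0 \<in> S" using c0(1) by (auto simp: D_def)
  have "t * u c0 = - \<beta> c0"
  proof (cases "\<beta> c0 > 0")
    case True
    with sign have "u c0 < 0" by simp
    with True show ?thesis unfolding c0(2) by (simp add: field_simps)
  next
    case False
    with \<beta>[OF \<open>c0 \<in> S\<close>] have "\<beta> c0 < 0" by simp
    with sign have "u c0 > 0" by (simp add: mult_less_0_iff)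
    with \<open>\<beta> c0 < 0\<close> show ?thesis unfolding c0(2) by (simp add: field_simps)
  qed
  with t le \<open>c0 \<in> S\<close> show ?thesis by force
qed

lemma set_pair_list: "set (pair_list p) = {(k, l). k < l \<and> l < p}"
  unfolding pair_list_def by force

lemma distinct_concat_map:
  "distinct xs \<Longrightarrow> (\<forall>x\<in>set xs. distinct (f x)) \<Longrightarrow>
   (\<forall>x y. x \<in> set xs \<longrightarrow> y \<in> set xs \<longrightarrow> x \<noteq> y \<longrightarrow> set (f x) \<inter> set (f y) = {}) \<Longrightarrow>
   distinct (concat (map f xs))"
  by (induction xs) auto

lemma distinct_pair_list: "distinct (pair_list p)"
  unfolding pair_list_def by (rule distinct_concat_map) (auto simp: distinct_map inj_on_def)

lemma pair_list_nth:
  "c < length (pair_list p) \<Longrightarrow> fst (pair_list p ! c) < snd (pair_list p ! c) \<and> snd (pair_list p ! c) < p"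
  using nth_mem[of c "pair_list p"] set_pair_list[of p] by auto

lemma block_row_less: "i < n \<Longrightarrow> b < p \<Longrightarrow> b * n + i < n * (p::nat)"
proof -
  assume "i < n" "b < p"
  then have "b * n + i < (b + 1) * n" by simp
  also have "\<dots> \<le> p * n" using \<open>b < p\<close> by (intro mult_le_mono1) simp
  finally show ?thesis by (simp add: mult.commute)
qed

lemma dim_A_mat:
  "X \<in> carrier_mat n p \<Longrightarrow> dim_row (A_mat X) = n * p \<and> dim_col (A_mat X) = length (pair_list p)"
  unfolding A_mat_def by (simp add: Let_def)

lemma A_mat_block_entry:
  assumes X: "X \<in> carrier_mat n p" and i: "i < n" and b: "b < p" and c: "c < length (pair_list p)"
    and kl: "pair_list p ! c = (k, l)"
  shows "A_mat X $$ (b * n + i, c) =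
    (if b = k then - X $$ (i, l) else if b = l then - X $$ (i, k) else 0)"
proof -
  have "(b * n + i) div n = b" "(b * n + i) mod n = i" using i by auto
  then show ?thesis
    using X block_row_less[OF i b] c kl unfolding A_mat_def by (simp add: Let_def)
qed

lemma sum_offdiag_eq_pair_list:
  fixes g :: "nat \<times> nat \<Rightarrow> real"
  assumes sym: "\<And>a b. a < p \<Longrightarrow> b < p \<Longrightarrow> g (a, b) = g (b, a)"
  shows "(\<Sum>a<p. \<Sum>b<p. if a = b then 0 else g (a, b)) = 2 * (\<Sum>c<length (pair_list p). g (pair_list p ! c))"
proof -
  define U where "U = {(a, b). a < b \<and> b < p}"
  define W where "W = {(a, b). b < a \<and> a < p}"
  have fin: "finite U" "finite W"
    by (rule finite_subset[of _ "{..<p} \<times> {..<p}"], auto simp: U_def W_def)+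
  have "(\<Sum>a<p. \<Sum>b<p. if a = b then 0 else g (a, b)) = (\<Sum>x\<in>{..<p} \<times> {..<p}. if fst x = snd x then 0 else g x)"
    unfolding sum.cartesian_product by (intro sum.cong refl) (auto simp: case_prod_beta)
  also have "\<dots> = (\<Sum>x\<in>U \<union> W. if fst x = snd x then 0 else g x)"
    by (rule sum.mono_neutral_right) (auto simp: U_def W_def)
  also have "\<dots> = (\<Sum>x\<in>U. g x) + (\<Sum>x\<in>W. g x)"
    by (subst sum.union_disjoint[OF fin]) (auto simp: U_def W_def intro!: sum.cong arg_cong2[where f = "(+)"])
  also have "(\<Sum>x\<in>W. g x) = (\<Sum>x\<in>U. g (prod.swap x))"
  proof -
    have "W = prod.swap ` U" by (auto simp: U_def W_def image_iff)
    then show ?thesis by (simp add: sum.reindex comp_def)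
  qed
  also have "\<dots> = (\<Sum>x\<in>U. g x)" using sym by (intro sum.cong) (auto simp: U_def)
  also have "(\<Sum>x\<in>U. g x) = (\<Sum>c<length (pair_list p). g (pair_list p ! c))"
    unfolding U_def set_pair_list[symmetric] sum.distinct_set_conv_list[OF distinct_pair_list]
    by (simp add: sum_list_sum_nth atLeast0LessThan)
  finally show ?thesis by simp
qed

section \<open>The CONCORD objective on symmetric matrices\<close>

lemma sym_entry: "transpose_mat Om = Om \<Longrightarrow> a < dim_row Om \<Longrightarrow> b < dim_col Om \<Longrightarrow> Om $$ (a, b) = Om $$ (b, a)"
  by (metis index_transpose_mat(1))

lemma index_mult_mat_sum:
  "X \<in> carrier_mat n p \<Longrightarrow> Om \<in> carrier_mat p q \<Longrightarrow> i < n \<Longrightarrow> b < q \<Longrightarrow>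
   (X * Om) $$ (i, b) = (\<Sum>a<p. X $$ (i, a) * Om $$ (a, b))"
  by (simp add: scalar_prod_def atLeast0LessThan)

lemma concord_obj_sym_eq:
  fixes X Om :: "real mat"
  assumes X: "X \<in> carrier_mat n p" and n: "n > 0" and Om: "Om \<in> carrier_mat p p"
    and sym: "transpose_mat Om = Om"
  shows "concord_obj X lam1 Om = - (1/2) * ln (det (diag_part Om * diag_part Om))
     + (1/2) * (\<Sum>b<p. \<Sum>i<n. ((X * Om) $$ (i, b))\<^sup>2)
     + 2 * lam1 * (\<Sum>c<length (pair_list p). \<bar>Om $$ (pair_list p ! c)\<bar>)"
proof -
  have sym': "Om $$ (a, b) = Om $$ (b, a)" if "a < p" "b < p" for a b
    using sym_entry[OF sym] that Om by auto
  have S: "Sigma_hat X $$ (a, c) = (1/n) * (\<Sum>i<n. X $$ (i, a) * X $$ (i, c))" if "a < p" "c < p" for a c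
    using X that unfolding Sigma_hat_def by (simp add: scalar_prod_def atLeast0LessThan)
  have dS: "Sigma_hat X \<in> carrier_mat p p" using X unfolding Sigma_hat_def by simp
  have "real n / 2 * mtrace (Sigma_hat X * Om * Om)
      = real n / 2 * (\<Sum>a<p. \<Sum>c<p. Sigma_hat X $$ (a, c) * (\<Sum>b<p. Om $$ (c, b) * Om $$ (b, a)))"
    unfolding mtrace_def using dS Om by (simp add: scalar_prod_def atLeast0LessThan)
  also have "\<dots> = (1/2) * (\<Sum>a<p. \<Sum>c<p. \<Sum>b<p. \<Sum>i<n. X $$ (i, a) * X $$ (i, c) * Om $$ (c, b) * Om $$ (b, a))"
    using n by (simp add: S sum_distrib_left sum_distrib_right mult.assoc sum.swap[of _ "{..<n}"])
  also have "\<dots> = (1/2) * (\<Sum>b<p. \<Sum>i<n. \<Sum>a<p. \<Sum>c<p. X $$ (i, a) * X $$ (i, c) * Om $$ (c, b) * Om $$ (a, b))"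
  proof -
    have "(\<Sum>a<p. \<Sum>c<p. \<Sum>b<p. \<Sum>i<n. f a b c i) = (\<Sum>b<p. \<Sum>i<n. \<Sum>a<p. \<Sum>c<p. f a b c i)"
      for f :: "nat \<Rightarrow> nat \<Rightarrow> nat \<Rightarrow> nat \<Rightarrow> real"
      by (subst sum.swap, subst (2) sum.swap) (simp add: sum.swap[of _ "{..<n}"])
    then show ?thesis using sym' by (auto intro!: sum.cong arg_cong[where f = "\<lambda>x. (1/2) * x"])
  qed
  also have "\<dots> = (1/2) * (\<Sum>b<p. \<Sum>i<n. (\<Sum>a<p. X $$ (i, a) * Om $$ (a, b))\<^sup>2)"
    by (simp add: power2_eq_square sum_product mult.assoc mult.left_commute mult.commute)
  also have "\<dots> = (1/2) * (\<Sum>b<p. \<Sum>i<n. ((X * Om) $$ (i, b))\<^sup>2)"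
    by (simp del: index_mult_mat(1) add: index_mult_mat_sum[OF X Om])
  finally have quad: "real n / 2 * mtrace (Sigma_hat X * Om * Om) = \<dots>" .
  have "l1_norm_mat (off_part Om) = (\<Sum>a<p. \<Sum>b<p. if a = b then 0 else \<bar>Om $$ (a, b)\<bar>)"
    unfolding l1_norm_mat_def off_part_def using Om by (intro sum.cong) auto
  also have "\<dots> = 2 * (\<Sum>c<length (pair_list p). \<bar>Om $$ (pair_list p ! c)\<bar>)"
    using sum_offdiag_eq_pair_list[of p "\<lambda>x. \<bar>Om $$ x\<bar>"] sym' by simp
  finally have l1: "l1_norm_mat (off_part Om) = \<dots>" .
  have dX: "dim_row X = n" using X by simp
  show ?thesis unfolding concord_obj_def dX quad l1 by simp
qed

definition pair_dir :: "nat \<Rightarrow> nat set \<Rightarrow> (nat \<Rightarrow> real) \<Rightarrow> real mat" where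
  "pair_dir p C u = mat p p (\<lambda>(a, b). \<Sum>c\<in>C.
     u c * ((if pair_list p ! c = (a, b) then 1 else 0) + (if pair_list p ! c = (b, a) then 1 else 0)))"

lemma dim_pair_dir [simp]: "dim_row (pair_dir p C u) = p" "dim_col (pair_dir p C u) = p"
  unfolding pair_dir_def by simp_all

lemma pair_dir_carrier [simp]: "pair_dir p C u \<in> carrier_mat p p"
  by (simp add: carrier_matI)

lemma transpose_pair_dir: "transpose_mat (pair_dir p C u) = pair_dir p C u"
  unfolding pair_dir_def by (intro eq_matI) (auto intro!: sum.cong)

lemma pair_dir_diag:
  assumes C: "C \<subseteq> {..<length (pair_list p)}" and a: "a < p"
  shows "pair_dir p C u $$ (a, a) = 0"
proof -
  have "pair_list p ! c \<noteq> (a, a)" if "c \<in> C" for c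
    using pair_list_nth[of c p] that C by fastforce
  then show ?thesis using a unfolding pair_dir_def by (auto intro!: sum.neutral)
qed

lemma pair_dir_pair_list:
  assumes C: "C \<subseteq> {..<length (pair_list p)}" and c': "c' < length (pair_list p)"
  shows "pair_dir p C u $$ (pair_list p ! c') = (if c' \<in> C then u c' else 0)"
proof -
  obtain k l where kl: "pair_list p ! c' = (k, l)" by fastforce
  with pair_list_nth[OF c'] have "k < l" "l < p" by auto
  have "pair_dir p C u $$ (k, l) = (\<Sum>c\<in>C. if c = c' then u c else 0)"
    unfolding pair_dir_def using \<open>k < l\<close> \<open>l < p\<close>
  proof (simp, intro sum.cong refl)
    fix c assume "c \<in> C"
    then have c: "c < length (pair_list p)" using C by auto
    have "pair_list p ! c = (k, l) \<longleftrightarrow> c = c'"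
      using nth_eq_iff_index_eq[OF distinct_pair_list c c'] kl by simp
    moreover have "pair_list p ! c \<noteq> (l, k)"
      using pair_list_nth[OF c] \<open>k < l\<close> by auto
    ultimately show "u c * ((if pair_list p ! c = (k, l) then 1 else 0) + (if pair_list p ! c = (l, k) then 1 else 0))
      = (if c = c' then u c else 0)" by auto
  qed
  then show ?thesis using C kl by (simp add: finite_subset)
qed

text \<open>Stacking the columns of \<open>X * pair_dir p C u\<close> gives \<open>-A u\<close>: this is where \<open>A_mat\<close> comes from.\<close>

lemma mult_pair_dir_entry:
  assumes X: "X \<in> carrier_mat n p" and C: "C \<subseteq> {..<length (pair_list p)}" and i: "i < n" and b: "b < p"
  shows "(X * pair_dir p C u) $$ (i, b) = - (\<Sum>c\<in>C. u c * A_mat X $$ (b * n + i, c))"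
proof -
  have col: "(\<Sum>a<p. X $$ (i, a) * ((if pair_list p ! c = (a, b) then 1 else 0) + (if pair_list p ! c = (b, a) then 1 else 0)))
      = - A_mat X $$ (b * n + i, c)" if "c \<in> C" for c
  proof -
    have cL: "c < length (pair_list p)" using that C by auto
    obtain k l where kl: "pair_list p ! c = (k, l)" by fastforce
    with pair_list_nth[OF cL] have "k < l" "l < p" by auto
    have "(\<Sum>a<p. X $$ (i, a) * ((if pair_list p ! c = (a, b) then 1 else 0) + (if pair_list p ! c = (b, a) then 1 else 0)))
       = (\<Sum>a<p. (if a = k then (if b = l then X $$ (i, a) else 0) else 0) + (if a = l then (if b = k then X $$ (i, a) else 0) else 0))"
      unfolding kl by (intro sum.cong refl) auto
    also have "\<dots> = (if b = l then X $$ (i, k) else 0) + (if b = k then X $$ (i, l) else 0)"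
      using \<open>k < l\<close> \<open>l < p\<close> by (simp add: sum.distrib)
    also have "\<dots> = - A_mat X $$ (b * n + i, c)"
      using A_mat_block_entry[OF X i b cL kl] \<open>k < l\<close> by auto
    finally show ?thesis .
  qed
  have "(X * pair_dir p C u) $$ (i, b) = (\<Sum>c\<in>C. u c * (\<Sum>a<p. X $$ (i, a) *
      ((if pair_list p ! c = (a, b) then 1 else 0) + (if pair_list p ! c = (b, a) then 1 else 0))))"
    using X i b unfolding index_mult_mat_sum[OF X pair_dir_carrier i b]
    by (simp add: pair_dir_def sum_distrib_left sum_distrib_right mult.left_commute sum.swap[of _ C])
  also have "\<dots> = - (\<Sum>c\<in>C. u c * A_mat X $$ (b * n + i, c))"
    by (simp add: col sum_negf[symmetric])
  finally show ?thesis .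
qed

lemma transpose_pair_update:
  assumes Om: "Om \<in> carrier_mat p p" and sym: "transpose_mat Om = Om"
  shows "transpose_mat (Om + t \<cdot>\<^sub>m pair_dir p C u) = Om + t \<cdot>\<^sub>m pair_dir p C u"
proof (rule eq_matI)
  fix i j assume "i < dim_row (Om + t \<cdot>\<^sub>m pair_dir p C u)" "j < dim_col (Om + t \<cdot>\<^sub>m pair_dir p C u)"
  then have "i < p" "j < p" using Om by auto
  then show "transpose_mat (Om + t \<cdot>\<^sub>m pair_dir p C u) $$ (i, j) = (Om + t \<cdot>\<^sub>m pair_dir p C u) $$ (i, j)"
    using Om sym_entry[OF sym] sym_entry[OF transpose_pair_dir[of p C u]] by auto
qed auto

lemma diag_part_pair_update:
  "Om \<in> carrier_mat p p \<Longrightarrow> C \<subseteq> {..<length (pair_list p)} \<Longrightarrow>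
   diag_part (Om + t \<cdot>\<^sub>m pair_dir p C u) = diag_part Om"
  by (intro eq_matI) (auto simp: diag_part_def pair_dir_diag)

lemma admissible_pair_update:
  "admissible p Om \<Longrightarrow> C \<subseteq> {..<length (pair_list p)} \<Longrightarrow> admissible p (Om + t \<cdot>\<^sub>m pair_dir p C u)"
  unfolding admissible_def by (simp add: diag_part_pair_update)

lemma pair_update_pair_list:
  assumes Om: "Om \<in> carrier_mat p p" and C: "C \<subseteq> {..<length (pair_list p)}" and c: "c < length (pair_list p)"
  shows "(Om + t \<cdot>\<^sub>m pair_dir p C u) $$ (pair_list p ! c) = Om $$ (pair_list p ! c) + t * (if c \<in> C then u c else 0)"
  using Om pair_list_nth[OF c] pair_dir_pair_list[OF C c] by (cases "pair_list p ! c") auto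

lemma concord_obj_pair_update:
  assumes X: "X \<in> carrier_mat n p" and n: "n > 0" and Om: "Om \<in> carrier_mat p p"
    and sym: "transpose_mat Om = Om" and C: "C \<subseteq> {..<length (pair_list p)}"
  shows "concord_obj X lam1 (Om + t \<cdot>\<^sub>m pair_dir p C u) = - (1/2) * ln (det (diag_part Om * diag_part Om))
     + (1/2) * (\<Sum>b<p. \<Sum>i<n. ((X * Om) $$ (i, b) - t * (\<Sum>c\<in>C. u c * A_mat X $$ (b * n + i, c)))\<^sup>2)
     + 2 * lam1 * (\<Sum>c<length (pair_list p). \<bar>Om $$ (pair_list p ! c) + t * (if c \<in> C then u c else 0)\<bar>)"
proof -
  let ?D = "pair_dir p C u"
  have "X * (Om + t \<cdot>\<^sub>m ?D) = X * Om + t \<cdot>\<^sub>m (X * ?D)"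
    using X Om by (simp add: mult_add_distrib_mat[OF X] mult_smult_distrib[OF X pair_dir_carrier])
  then have "(X * (Om + t \<cdot>\<^sub>m ?D)) $$ (i, b) = (X * Om) $$ (i, b) - t * (\<Sum>c\<in>C. u c * A_mat X $$ (b * n + i, c))"
    if "i < n" "b < p" for i b
    using X Om that by (simp del: index_mult_mat(1) add: mult_pair_dir_entry[OF X C])
  moreover have "Om + t \<cdot>\<^sub>m ?D \<in> carrier_mat p p" using Om by simp
  ultimately show ?thesis
    using concord_obj_sym_eq[OF X n _ transpose_pair_update[OF Om sym]]
    by (simp add: diag_part_pair_update[OF Om C] pair_update_pair_list[OF Om C])
qed

section \<open>Stationarity and the support of CONCORD estimates\<close>

definition pair_support :: "nat \<Rightarrow> real mat \<Rightarrow> nat set" where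
  "pair_support p Om = {c. c < length (pair_list p) \<and> Om $$ (pair_list p ! c) \<noteq> 0}"

lemma pair_support_subset: "pair_support p Om \<subseteq> {..<length (pair_list p)}"
  unfolding pair_support_def by auto

lemma finite_pair_support [simp]: "finite (pair_support p Om)"
  using finite_subset[OF pair_support_subset] by blast

lemma is_concordD:
  assumes X: "X \<in> carrier_mat n p" and conc: "is_concord X lam1 Om"
  shows "admissible p Om" "Om \<in> carrier_mat p p" "transpose_mat Om = Om"
    "\<And>Om'. admissible p Om' \<Longrightarrow> transpose_mat Om' = Om' \<Longrightarrow> concord_obj X lam1 Om \<le> concord_obj X lam1 Om'"
  using conc X unfolding is_concord_def admissible_def by auto

text \<open>The subgradient (KKT) condition for the pair \<open>c\<close>: perturbing \<open>\<Omega>\<^sub>c\<close> by \<open>t\<close> with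
  \<open>\<bar>t\<bar> < \<bar>\<Omega>\<^sub>c\<bar>\<close> changes the objective by a quadratic in \<open>t\<close>, whose linear coefficient must vanish.\<close>

lemma concord_stationarity:
  assumes X: "X \<in> carrier_mat n p" and n: "n > 0" and conc: "is_concord X lam1 Om"
    and c: "c \<in> pair_support p Om"
  shows "(\<Sum>b<p. \<Sum>i<n. A_mat X $$ (b * n + i, c) * (X * Om) $$ (i, b)) = 2 * lam1 * sgn (Om $$ (pair_list p ! c))"
proof -
  note Om = is_concordD[OF X conc]
  define L where "L = length (pair_list p)"
  define \<beta> where "\<beta> = Om $$ (pair_list p ! c)"
  define LD where "LD = - (1/2) * ln (det (diag_part Om * diag_part Om))"
  define W2 where "W2 = (\<Sum>b<p. \<Sum>i<n. ((X * Om) $$ (i, b))\<^sup>2)"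
  define AW where "AW = (\<Sum>b<p. \<Sum>i<n. A_mat X $$ (b * n + i, c) * (X * Om) $$ (i, b))"
  define A2 where "A2 = (\<Sum>b<p. \<Sum>i<n. (A_mat X $$ (b * n + i, c))\<^sup>2)"
  define B where "B = (\<Sum>c'<L. \<bar>Om $$ (pair_list p ! c')\<bar>)"
  have cL: "c < L" and \<beta>0: "\<beta> \<noteq> 0" using c unfolding pair_support_def L_def \<beta>_def by auto
  have C: "{c} \<subseteq> {..<length (pair_list p)}" using cL L_def by simp
  have quad: "(\<Sum>b<p. \<Sum>i<n. ((X * Om) $$ (i, b) - t * (\<Sum>c'\<in>{c}. 1 * A_mat X $$ (b * n + i, c')))\<^sup>2)
      = W2 - 2 * t * AW + t\<^sup>2 * A2" for t
    unfolding W2_def AW_def A2_def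
    by (simp add: power2_eq_square algebra_simps sum.distrib sum_subtractf sum_distrib_left del: index_mult_mat(1))
  have l1: "(\<Sum>c'<length (pair_list p). \<bar>Om $$ (pair_list p ! c') + t * (if c' \<in> {c} then 1 else 0)\<bar>)
      = B + (\<bar>\<beta> + t\<bar> - \<bar>\<beta>\<bar>)" for t
    using cL unfolding B_def L_def \<beta>_def by (simp add: sum.remove[of "{..<length (pair_list p)}" c])
  have "0 \<le> t * (2 * lam1 * sgn \<beta> - AW) + t\<^sup>2 * (A2 / 2)" if t: "\<bar>t\<bar> < \<bar>\<beta>\<bar>" for t
  proof -
    have "\<bar>\<beta> + t\<bar> - \<bar>\<beta>\<bar> = sgn \<beta> * t"
      using t \<beta>0 by (cases "\<beta> > 0") (auto simp: abs_if sgn_if)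
    moreover have "concord_obj X lam1 Om \<le> concord_obj X lam1 (Om + t \<cdot>\<^sub>m pair_dir p {c} (\<lambda>_. 1))"
      using Om by (intro Om(4) admissible_pair_update[OF _ C] transpose_pair_update)
    ultimately show ?thesis
      unfolding concord_obj_sym_eq[OF X n Om(2,3)] concord_obj_pair_update[OF X n Om(2,3) C] quad l1
      unfolding LD_def[symmetric] W2_def[symmetric] B_def[symmetric] L_def[symmetric]
      by (simp add: algebra_simps power2_eq_square)
  qed
  moreover have "A2 / 2 \<ge> 0" unfolding A2_def by (simp add: sum_nonneg)
  moreover have "\<bar>\<beta>\<bar> > 0" using \<beta>0 by simp
  ultimately have "2 * lam1 * sgn \<beta> - AW = 0"
    using linear_coeff_eq_0_if_nonneg_near_0 by blast
  then show ?thesis unfolding AW_def \<beta>_def by simp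
qed

lemma concord_null_vector_orthogonal_signs:
  assumes X: "X \<in> carrier_mat n p" and n: "n > 0" and lam: "lam1 > 0" and conc: "is_concord X lam1 Om"
    and E: "E \<subseteq> pair_support p Om"
    and null: "\<And>r. r < n * p \<Longrightarrow> (\<Sum>c\<in>E. A_mat X $$ (r, c) * v c) = 0"
  shows "(\<Sum>c\<in>E. sgn (Om $$ (pair_list p ! c)) * v c) = 0"
proof -
  define w where "w b i = (X * Om) $$ (i, b)" for b i
  have kkt: "(\<Sum>b<p. \<Sum>i<n. A_mat X $$ (b * n + i, c) * w b i) = 2 * lam1 * sgn (Om $$ (pair_list p ! c))"
    if "c \<in> E" for c
    unfolding w_def using concord_stationarity[OF X n conc] that E by blast
  have "2 * lam1 * (\<Sum>c\<in>E. sgn (Om $$ (pair_list p ! c)) * v c)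
      = (\<Sum>c\<in>E. v c * (2 * lam1 * sgn (Om $$ (pair_list p ! c))))"
    by (simp add: sum_distrib_left mult_ac)
  also have "\<dots> = (\<Sum>c\<in>E. v c * (\<Sum>b<p. \<Sum>i<n. A_mat X $$ (b * n + i, c) * w b i))"
    by (intro sum.cong refl) (simp add: kkt)
  also have "\<dots> = (\<Sum>b<p. \<Sum>i<n. w b i * (\<Sum>c\<in>E. A_mat X $$ (b * n + i, c) * v c))"
    by (simp add: sum_distrib_left sum.swap[of _ E] mult_ac)
  also have "\<dots> = 0" using null block_row_less by (intro sum.neutral ballI) simp
  finally show ?thesis using lam by simp
qed

lemma concord_obj_pair_update_null:
  assumes X: "X \<in> carrier_mat n p" and n: "n > 0" and Om: "Om \<in> carrier_mat p p"
    and sym: "transpose_mat Om = Om" and C: "C \<subseteq> {..<length (pair_list p)}"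
    and null: "\<And>r. r < n * p \<Longrightarrow> (\<Sum>c\<in>C. A_mat X $$ (r, c) * u c) = 0"
  shows "concord_obj X lam1 (Om + t \<cdot>\<^sub>m pair_dir p C u) - concord_obj X lam1 Om
    = 2 * lam1 * ((\<Sum>c\<in>C. \<bar>Om $$ (pair_list p ! c) + t * u c\<bar>) - (\<Sum>c\<in>C. \<bar>Om $$ (pair_list p ! c)\<bar>))"
proof -
  let ?L = "{..<length (pair_list p)}"
  have "(\<Sum>c\<in>C. u c * A_mat X $$ (b * n + i, c)) = 0" if "b < p" "i < n" for b i
    using null[OF block_row_less[OF that(2,1)]] by (simp add: mult.commute)
  then have quad: "(\<Sum>b<p. \<Sum>i<n. ((X * Om) $$ (i, b) - t * (\<Sum>c\<in>C. u c * A_mat X $$ (b * n + i, c)))\<^sup>2)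
      = (\<Sum>b<p. \<Sum>i<n. ((X * Om) $$ (i, b))\<^sup>2)"
    by (intro sum.cong refl) (simp del: index_mult_mat(1))
  have l1: "(\<Sum>c\<in>?L. \<bar>Om $$ (pair_list p ! c) + t * (if c \<in> C then u c else 0)\<bar>) - (\<Sum>c\<in>?L. \<bar>Om $$ (pair_list p ! c)\<bar>)
      = (\<Sum>c\<in>C. \<bar>Om $$ (pair_list p ! c) + t * u c\<bar>) - (\<Sum>c\<in>C. \<bar>Om $$ (pair_list p ! c)\<bar>)"
  proof -
    have "(\<Sum>c\<in>?L. \<bar>Om $$ (pair_list p ! c) + t * (if c \<in> C then u c else 0)\<bar>) - (\<Sum>c\<in>?L. \<bar>Om $$ (pair_list p ! c)\<bar>)
        = (\<Sum>c\<in>?L. \<bar>Om $$ (pair_list p ! c) + t * (if c \<in> C then u c else 0)\<bar> - \<bar>Om $$ (pair_list p ! c)\<bar>)"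
      by (simp add: sum_subtractf)
    also have "\<dots> = (\<Sum>c\<in>C. \<bar>Om $$ (pair_list p ! c) + t * u c\<bar> - \<bar>Om $$ (pair_list p ! c)\<bar>)"
      using C by (intro sum.mono_neutral_cong_right) auto
    finally show ?thesis by (simp add: sum_subtractf)
  qed
  show ?thesis
    unfolding concord_obj_pair_update[OF X n Om sym C] concord_obj_sym_eq[OF X n Om sym] quad l1[symmetric]
    by (simp add: algebra_simps)
qed

lemma concord_support_reduce:
  assumes X: "X \<in> carrier_mat n p" and n: "n > 0" and lam: "lam1 > 0" and conc: "is_concord X lam1 Om"
    and big: "card (pair_support p Om) > n * p"
  shows "\<exists>Om'. is_concord X lam1 Om' \<and> pair_support p Om' \<subset> pair_support p Om"
proof -
  note Om = is_concordD[OF X conc]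
  define S where "S = pair_support p Om"
  define L where "L = length (pair_list p)"
  define \<beta> where "\<beta> c = Om $$ (pair_list p ! c)" for c
  have SL: "S \<subseteq> {..<L}" unfolding S_def L_def by (rule pair_support_subset)
  have \<beta>S: "\<beta> c \<noteq> 0" if "c \<in> S" for c using that unfolding S_def pair_support_def \<beta>_def by simp
  obtain u where u: "\<exists>c\<in>S. u c \<noteq> 0" and null: "\<And>r. r < n * p \<Longrightarrow> (\<Sum>c\<in>S. A_mat X $$ (r, c) * u c) = 0"
    using homogeneous_system_nontrivial_solution[of S "n * p" "\<lambda>r c. A_mat X $$ (r, c)"] big
    unfolding S_def by auto
  have "(\<Sum>c\<in>S. sgn (\<beta> c) * u c) = 0"
    using concord_null_vector_orthogonal_signs[OF X n lam conc _ null] unfolding S_def \<beta>_def by simp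
  then obtain t c0 where c0: "c0 \<in> S" "\<beta> c0 + t * u c0 = 0"
    and l1_le: "(\<Sum>c\<in>S. \<bar>\<beta> c + t * u c\<bar>) \<le> (\<Sum>c\<in>S. \<bar>\<beta> c\<bar>)"
    using exists_zeroing_step_sum_abs_le[of S \<beta> u] \<beta>S u unfolding S_def by fastforce
  define Om' where "Om' = Om + t \<cdot>\<^sub>m pair_dir p S u"
  have "concord_obj X lam1 Om' - concord_obj X lam1 Om
      = 2 * lam1 * ((\<Sum>c\<in>S. \<bar>\<beta> c + t * u c\<bar>) - (\<Sum>c\<in>S. \<bar>\<beta> c\<bar>))"
    unfolding Om'_def \<beta>_def by (rule concord_obj_pair_update_null[OF X n Om(2,3) SL[unfolded L_def] null])
  also have "\<dots> \<le> 0" using l1_le lam by (simp add: mult_nonneg_nonpos)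
  finally have "concord_obj X lam1 Om' \<le> concord_obj X lam1 Om" by simp
  then have conc': "is_concord X lam1 Om'"
    using Om X admissible_pair_update[OF Om(1) SL[unfolded L_def]] transpose_pair_update[OF Om(2,3)]
    unfolding is_concord_def Om'_def by (auto intro: order_trans)
  have entry: "Om' $$ (pair_list p ! c) = \<beta> c + t * (if c \<in> S then u c else 0)" if "c < L" for c
    unfolding Om'_def \<beta>_def using pair_update_pair_list[OF Om(2) SL[unfolded L_def]] that L_def by simp
  have "pair_support p Om' \<subseteq> S - {c0}"
  proof
    fix c assume "c \<in> pair_support p Om'"
    then have "c < L" "\<beta> c + t * (if c \<in> S then u c else 0) \<noteq> 0"
      using entry unfolding pair_support_def L_def by auto
    moreover have "\<beta> c = 0" if "c \<notin> S"
      using that \<open>c < L\<close> unfolding S_def pair_support_def \<beta>_def L_def by simp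
    ultimately show "c \<in> S - {c0}" using c0(2) by (cases "c \<in> S") auto
  qed
  with c0(1) have "pair_support p Om' \<subset> pair_support p Om" unfolding S_def by blast
  with conc' show ?thesis by blast
qed

lemma concord_exists_support_card_le:
  assumes X: "X \<in> carrier_mat n p" and n: "n > 0" and lam: "lam1 > 0" and ex: "\<exists>Om. is_concord X lam1 Om"
  shows "\<exists>Om. is_concord X lam1 Om \<and> card (pair_support p Om) \<le> n * p"
proof -
  from ex obtain Om0 where "is_concord X lam1 Om0" by blast
  then obtain Om where conc: "is_concord X lam1 Om"
    and least: "\<And>Om'. is_concord X lam1 Om' \<Longrightarrow> card (pair_support p Om) \<le> card (pair_support p Om')"
    using ex_has_least_nat[of "is_concord X lam1" Om0 "\<lambda>Om. card (pair_support p Om)"] by blast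
  have "card (pair_support p Om) \<le> n * p"
  proof (rule ccontr)
    assume "\<not> card (pair_support p Om) \<le> n * p"
    then obtain Om' where conc': "is_concord X lam1 Om'" and sub: "pair_support p Om' \<subset> pair_support p Om"
      using concord_support_reduce[OF X n lam conc] by auto
    have "card (pair_support p Om') < card (pair_support p Om)"
      using psubset_card_mono[OF finite_pair_support sub] .
    with least[OF conc'] show False by simp
  qed
  with conc show ?thesis by blast
qed

text \<open>If \<open>v\<^sub>j \<noteq> 0\<close>, dividing \<open>A\<^sub>E v = 0\<close> and \<open>s\<^sup>T v = 0\<close> by \<open>-s\<^sub>j v\<^sub>j\<close> writes \<open>s\<^sub>j A\<^sub>j\<close> as the
  affine combination of the \<open>s\<^sub>i A\<^sub>i\<close>, \<open>i \<in> E - {j}\<close>, with weights \<open>-s\<^sub>i s\<^sub>j v\<^sub>i / v\<^sub>j\<close>.\<close>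

lemma general_position_signed_null_vector:
  assumes gp: "general_position A" and E: "E \<subseteq> {..<dim_col A}" "card E \<le> dim_row A + 1"
    and s: "\<And>c. c \<in> E \<Longrightarrow> s c = 1 \<or> s c = -1"
    and null: "\<And>r. r < dim_row A \<Longrightarrow> (\<Sum>c\<in>E. A $$ (r, c) * v c) = 0"
    and orth: "(\<Sum>c\<in>E. s c * v c) = 0"
  shows "\<forall>c\<in>E. v c = 0"
proof (rule ccontr)
  assume "\<not> (\<forall>c\<in>E. v c = 0)"
  then obtain j where j: "j \<in> E" "v j \<noteq> 0" by blast
  have finE: "finite E" using E(1) finite_subset by blast
  have s2: "s c * s c = 1" if "c \<in> E" for c using s[OF that] by auto
  define I where "I = E - {j}"
  define d where "d c = - v c * s c * s j / v j" for c
  have "(\<Sum>i\<in>I. d i) = 1"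
  proof -
    have "(\<Sum>i\<in>I. d i) = - s j / v j * (\<Sum>i\<in>I. s i * v i)"
      unfolding d_def by (simp add: sum_distrib_left algebra_simps)
    also have "(\<Sum>i\<in>I. s i * v i) = - s j * v j"
      using orth sum.remove[OF finE j(1), of "\<lambda>c. s c * v c"] unfolding I_def by simp
    finally show ?thesis using j(2) s2[OF j(1)] by (simp add: field_simps)
  qed
  moreover have "\<forall>r<dim_row A. s j * A $$ (r, j) = (\<Sum>i\<in>I. d i * (s i * A $$ (r, i)))"
  proof (intro allI impI)
    fix r assume r: "r < dim_row A"
    have "(\<Sum>i\<in>I. d i * (s i * A $$ (r, i))) = - s j / v j * (\<Sum>i\<in>I. A $$ (r, i) * v i)"
      unfolding sum_distrib_left using s2 by (intro sum.cong refl) (auto simp: d_def I_def field_simps)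
    also have "(\<Sum>i\<in>I. A $$ (r, i) * v i) = - A $$ (r, j) * v j"
      using null[OF r] sum.remove[OF finE j(1), of "\<lambda>c. A $$ (r, c) * v c"] unfolding I_def by simp
    finally show "s j * A $$ (r, j) = (\<Sum>i\<in>I. d i * (s i * A $$ (r, i)))" using j(2) by simp
  qed
  moreover have "I \<subseteq> {..<dim_col A}" "card I \<le> dim_row A" "j < dim_col A" "j \<notin> I"
    "\<forall>i\<in>I. s i = 1 \<or> s i = -1" "s j = 1 \<or> s j = -1"
    using E j(1) finE s unfolding I_def by auto
  ultimately show False
    using gp[unfolded general_position_def, rule_format, of I s j "s j"] by blast
qed

lemma concord_support_card_le_if_general_position:
  assumes X: "X \<in> carrier_mat n p" and n: "n > 0" and lam: "lam1 > 0" and conc: "is_concord X lam1 Om"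
    and gp: "general_position (A_mat X)"
  shows "card (pair_support p Om) \<le> n * p"
proof (rule ccontr)
  assume "\<not> card (pair_support p Om) \<le> n * p"
  then have "n * p + 1 \<le> card (pair_support p Om)" by simp
  then obtain E where E: "E \<subseteq> pair_support p Om" "card E = n * p + 1" "finite E"
    by (rule obtain_subset_with_card_n)
  obtain v where v: "\<exists>c\<in>E. v c \<noteq> 0" and null: "\<And>r. r < n * p \<Longrightarrow> (\<Sum>c\<in>E. A_mat X $$ (r, c) * v c) = 0"
    using homogeneous_system_nontrivial_solution[OF E(3), of "n * p" "\<lambda>r c. A_mat X $$ (r, c)"] E(2) by auto
  have dims: "dim_row (A_mat X) = n * p" "dim_col (A_mat X) = length (pair_list p)"
    using dim_A_mat[OF X] by auto
  have "\<forall>c\<in>E. v c = 0"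
  proof (rule general_position_signed_null_vector[OF gp])
    show "E \<subseteq> {..<dim_col (A_mat X)}" "card E \<le> dim_row (A_mat X) + 1"
      using E(1,2) pair_support_subset[of p Om] unfolding dims by auto
    show "sgn (Om $$ (pair_list p ! c)) = 1 \<or> sgn (Om $$ (pair_list p ! c)) = -1" if "c \<in> E" for c
      using that E(1) unfolding pair_support_def by (auto simp: sgn_if)
    show "(\<Sum>c\<in>E. A_mat X $$ (r, c) * v c) = 0" if "r < dim_row (A_mat X)" for r
      using that null unfolding dims by simp
    show "(\<Sum>c\<in>E. sgn (Om $$ (pair_list p ! c)) * v c) = 0"
      by (rule concord_null_vector_orthogonal_signs[OF X n lam conc E(1) null])
  qed
  with v show False by blast
qed

lemma card_vec_vech_eq_card_pair_support:
  assumes Om: "Om \<in> carrier_mat p p" and sym: "transpose_mat Om = Om"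
  shows "card_vec (vech Om) = card (pair_support p Om)"
proof -
  define LP where "LP = concat (map (\<lambda>i. map (Pair i) [0..<i]) [0..<p])"
  have vech: "vech Om = vec_of_list (map (\<lambda>x. Om $$ x) LP)"
    using Om unfolding vech_def LP_def by (simp add: map_concat comp_def)
  have "distinct LP" unfolding LP_def
    by (rule distinct_concat_map) (auto simp: distinct_map inj_on_def)
  have "{x. Om $$ x \<noteq> 0} \<inter> set LP = prod.swap ` ({x. Om $$ x \<noteq> 0} \<inter> set (pair_list p))"
    using sym_entry[OF sym] Om unfolding LP_def set_pair_list by (auto simp: image_iff) force+
  moreover have "inj_on prod.swap A" for A :: "(nat \<times> nat) set" by (rule inj_onI) auto
  ultimately have swap: "card ({x. Om $$ x \<noteq> 0} \<inter> set LP) = card ({x. Om $$ x \<noteq> 0} \<inter> set (pair_list p))"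
    by (simp add: card_image)
  have "card_vec (vech Om) = length (filter (\<lambda>x. x \<noteq> 0) (map (\<lambda>x. Om $$ x) LP))"
    unfolding vech card_vec_def length_filter_conv_card by (simp del: vec_of_list_map add: vec_of_list_index)
  also have "\<dots> = card ({x. Om $$ x \<noteq> 0} \<inter> set LP)"
    using \<open>distinct LP\<close> by (simp add: distinct_length_filter comp_def)
  also have "\<dots> = length (filter (\<lambda>x. Om $$ x \<noteq> 0) (pair_list p))"
    using swap distinct_pair_list by (simp add: distinct_length_filter)
  also have "\<dots> = card (pair_support p Om)"
    unfolding pair_support_def by (rule length_filter_conv_card)
  finally show ?thesis .
qed

lemma dim_vech: "Om \<in> carrier_mat p p \<Longrightarrow> dim_vec (vech Om) = p * (p - 1) div 2"
proof -
  assume "Om \<in> carrier_mat p p"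
  then have "dim_vec (vech Om) = \<Sum>{0..<p}"
    unfolding vech_def by (simp add: length_concat sum_list_sum_nth comp_def atLeast0LessThan)
  then show ?thesis by (simp add: Sum_Ico_nat)
qed

lemma card_vec_le_dim_vec: "card_vec v \<le> dim_vec v"
  unfolding card_vec_def using card_mono[of "{..<dim_vec v}" "{i. i < dim_vec v \<and> v $ i \<noteq> 0}"] by auto

theorem theorem3:
  fixes X :: "real mat" and n p :: nat and lam1 lam2 :: real
  assumes "X \<in> carrier_mat n p" and "n > 0"
    and "lam1 > 0" and "lam2 > 0"
    and "n * p < p * (p - 1) div 2"
  shows "(\<forall>Om. is_pseudonet X lam1 lam2 Om \<longrightarrow> card_vec (vech Om) \<le> p * (p - 1) div 2)
    \<and> ((\<exists>Om. is_concord X lam1 Om) \<longrightarrow>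
         (\<exists>Om. is_concord X lam1 Om \<and> card_vec (vech Om) \<le> n * p))
    \<and> (general_position (A_mat X) \<longrightarrow>
         (\<forall>Om. is_concord X lam1 Om \<longrightarrow> card_vec (vech Om) \<le> n * p))"
proof -
  note X = assms(1) and n = assms(2) and lam = assms(3)
  have card_concord: "card_vec (vech Om) = card (pair_support p Om)" if "is_concord X lam1 Om" for Om
    using is_concordD[OF X that] by (simp add: card_vec_vech_eq_card_pair_support)
  have "card_vec (vech Om) \<le> p * (p - 1) div 2" if "is_pseudonet X lam1 lam2 Om" for Om
    using that X card_vec_le_dim_vec[of "vech Om"] dim_vech[of Om p]
    unfolding is_pseudonet_def admissible_def by auto
  moreover have "\<exists>Om. is_concord X lam1 Om \<and> card_vec (vech Om) \<le> n * p" if "\<exists>Om. is_concord X lam1 Om"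
    using concord_exists_support_card_le[OF X n lam that] card_concord by metis
  moreover have "card_vec (vech Om) \<le> n * p" if "general_position (A_mat X)" "is_concord X lam1 Om" for Om
    using concord_support_card_le_if_general_position[OF X n lam that(2,1)] card_concord[OF that(2)] by simp
  ultimately show ?thesis by blast
qed

end
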